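(* Let $T$ be the Lr $(\mathbf a,\tau)$ interval exchange transformation, and assume that $\tau$ is irreducible and fully split and that $T$ satisfies the Keane Condition. Then the associated subshift $(X,S)$ has no doubly asymptotic pair of distinct points: if $\alpha,\beta\in X$ and there is $N\in\mathbb N$ with $\alpha_i=\beta_i$ for all $|i|\ge N$, then $\alpha=\beta$.
   Context: Fix $n\ge 2$, $[n]=\{1,\dots,n\}$, a vector $\mathbf a=(a_1,\dots,a_n)$ with all $a_i>0$ and $\sum_i a_i=1$, and a permutation $\tau$ of $[n]$. Put $b_0=0$, $b_i=\sum_{j=1}^i a_j$, $J_i=[b_{i-1},b_i)$, $\tilde J_i=(b_{i-1},b_i]$ for $i\in[n]$, and $D=\{b_1,\dots,b_{n-1}\}$. Put $b^\tau_0=0$, $b^\tau_i=\sum_{j=1}^i a_{\tau^{-1}(j)}$, $D^\tau=\{b^\tau_1,\dots,b^\tau_{n-1}\}$. The Lr $(\mathbf a,\tau)$ interval exchange transformation $T:[0,1)\to[0,1)$ and its dual $\tilde T:(0,1]\to(0,1]$ are defined by $x\mapsto x-b_{i-1}+b^\tau_{\tau(i)-1}$ for $x\in J_i$ (resp. $x\in\tilde J_i$); both are bijections. $\tau$ is irreducible if $\tau(\{1,\dots,j\})\ne\{1,\dots,j\}$ for $j=1,\dots,n-1$; split if $\tau(j+1)\ne\tau(j)+1$ for $j=1,\dots,n-1$; fully split if it is split and moreover $\tau(1)\ne\tau(n)+1$ and $\tau^{-1}(1)\ne\tau^{-1}(n)+1$. $T$ satisfies the Keane Condition if $D\cap T^k(D)=\emptyset$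 for all $k\in\mathbb N$. Let $\Omega=[n]^{\mathbb Z}$ with the product topology and shift $S(\alpha)_i=\alpha_{i+1}$. The itinerary maps $\mathcal I:[0,1)\to\Omega$, $\tilde{\mathcal I}:(0,1]\to\Omega$ are $\mathcal I(x)_k=i\iff T^kx\in J_i$ and $\tilde{\mathcal I}(x)_k=i\iff\tilde T^kx\in\tilde J_i$ ($k\in\mathbb Z$). Let $D_\infty=\{0,1\}\cup\bigcup_{k\in\mathbb Z}T^k(D)$, $R=[0,1]\setminus D_\infty$ (the regular points), $X_0=\mathcal I(R)$, and $X=\overline{X_0}$; $(X,S)$ is the associated subshift. *)

theory Defs
  imports "HOL-Analysis.Analysis" "HOL-Combinatorics.Permutations"
begin

text \<open>Indices run over [n] = {1..n}; a, tau are functions on nat, relevant on {1..n}.\<close>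

definition iet_b :: "(nat \<Rightarrow> real) \<Rightarrow> nat \<Rightarrow> real" where
  "iet_b a i = (\<Sum>j=1..i. a j)"

definition iet_btau :: "(nat \<Rightarrow> real) \<Rightarrow> (nat \<Rightarrow> nat) \<Rightarrow> nat \<Rightarrow> real" where
  "iet_btau a tau i = (\<Sum>j=1..i. a (inv tau j))"

definition iet_J :: "(nat \<Rightarrow> real) \<Rightarrow> nat \<Rightarrow> real set" where
  "iet_J a i = {iet_b a (i - 1) ..< iet_b a i}"

definition iet_D :: "nat \<Rightarrow> (nat \<Rightarrow> real) \<Rightarrow> real set" where
  "iet_D n a = iet_b a ` {1..n-1}"

text \<open>The Lr (a,tau) interval exchange T on [0,1) (value outside [0,1) irrelevant).\<close>
definition iet_T :: "nat \<Rightarrow> (nat \<Rightarrow> real) \<Rightarrow> (nat \<Rightarrow> nat) \<Rightarrow> real \<Rightarrow> real" where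
  "iet_T n a tau x =
     (if \<exists>i\<in>{1..n}. x \<in> iet_J a i
      then (let i = (THE i. i \<in> {1..n} \<and> x \<in> iet_J a i)
            in x - iet_b a (i - 1) + iet_btau a tau (tau i - 1))
      else x)"

definition iet_Tpow :: "nat \<Rightarrow> (nat \<Rightarrow> real) \<Rightarrow> (nat \<Rightarrow> nat) \<Rightarrow> int \<Rightarrow> real \<Rightarrow> real" where
  "iet_Tpow n a tau k =
     (if k \<ge> 0 then (iet_T n a tau) ^^ (nat k)
      else (inv_into {0..<1} (iet_T n a tau)) ^^ (nat (- k)))"

definition irreducible_perm :: "nat \<Rightarrow> (nat \<Rightarrow> nat) \<Rightarrow> bool" where
  "irreducible_perm n tau = (\<forall>j\<in>{1..n-1}. tau ` {1..j} \<noteq> {1..j})"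

definition split_perm :: "nat \<Rightarrow> (nat \<Rightarrow> nat) \<Rightarrow> bool" where
  "split_perm n tau = (\<forall>j\<in>{1..n-1}. tau (j + 1) \<noteq> tau j + 1)"

definition fully_split_perm :: "nat \<Rightarrow> (nat \<Rightarrow> nat) \<Rightarrow> bool" where
  "fully_split_perm n tau = (split_perm n tau \<and> tau 1 \<noteq> tau n + 1 \<and> inv tau 1 \<noteq> inv tau n + 1)"

definition keane_condition :: "nat \<Rightarrow> (nat \<Rightarrow> real) \<Rightarrow> (nat \<Rightarrow> nat) \<Rightarrow> bool" where
  "keane_condition n a tau =
     (\<forall>k::nat. k \<ge> 1 \<longrightarrow> iet_D n a \<inter> ((iet_T n a tau) ^^ k) ` iet_D n a = {})"

definition iet_Dinf :: "nat \<Rightarrow> (nat \<Rightarrow> real) \<Rightarrow> (nat \<Rightarrow> nat) \<Rightarrow> real set" where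
  "iet_Dinf n a tau = {0, 1} \<union> (\<Union>k::int. iet_Tpow n a tau k ` iet_D n a)"

definition iet_R :: "nat \<Rightarrow> (nat \<Rightarrow> real) \<Rightarrow> (nat \<Rightarrow> nat) \<Rightarrow> real set" where
  "iet_R n a tau = {0..1} - iet_Dinf n a tau"

definition iet_itin :: "nat \<Rightarrow> (nat \<Rightarrow> real) \<Rightarrow> (nat \<Rightarrow> nat) \<Rightarrow> real \<Rightarrow> int \<Rightarrow> nat" where
  "iet_itin n a tau x k = (THE i. i \<in> {1..n} \<and> iet_Tpow n a tau k x \<in> iet_J a i)"

text \<open>Associated subshift X: closure (product topology on int => nat, nat discrete) of I(R).\<close>
definition iet_X :: "nat \<Rightarrow> (nat \<Rightarrow> real) \<Rightarrow> (nat \<Rightarrow> nat) \<Rightarrow> (int \<Rightarrow> nat) set" where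
  "iet_X n a tau = closure (iet_itin n a tau ` iet_R n a tau)"

end

theory Submission
  imports Defs
begin

text \<open>
  Suppose \<alpha> \<noteq> \<beta> in X agree outside [-N, N], and let f be their first disagreement. Approximating
  \<alpha> and \<beta> on a long window by itineraries of regular points gives two orbits that share a long
  itinerary, separate at time f across a discontinuity b_i, and share a long itinerary again from
  time N on. Sharing a long itinerary forces two points to be close: by the Keane condition no
  interval stays away from the discontinuities forever. While the orbits share their itinerary
  they are translates of each other, so at time f they sit just left and just right of b_i; after
  L = N - f further steps they then follow the orbit of b_i under the dual map and under T
  respectively. Splitness and the Keane condition make these two orbits differ at every positive
  time, so the points are separated by a definite gap at time N, a contradiction.
\<close>

lemma closure_agrees_on_finite_window:
  fixes \<alpha> :: "'a \<Rightarrow> 'b::discrete_topology"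
  assumes "\<alpha> \<in> closure A" "finite W"
  shows "\<exists>\<gamma>\<in>A. \<forall>k\<in>W. \<gamma> k = \<alpha> k"
proof -
  let ?U = "\<Inter>k\<in>W. (\<lambda>\<gamma>. \<gamma> k) -` {\<alpha> k}"
  have "open ((\<lambda>\<gamma>::'a \<Rightarrow> 'b. \<gamma> k) -` {\<alpha> k})" for k
    using continuous_on_open_vimage[OF open_UNIV, of "\<lambda>\<gamma>::'a \<Rightarrow> 'b. \<gamma> k"]
    by (simp add: open_discrete)
  then have "open ?U" using assms(2) by blast
  moreover have "\<alpha> \<in> ?U" by auto
  ultimately have "?U \<inter> A \<noteq> {}"
    using assms(1) unfolding closure_iff_nhds_not_empty by blast
  then show ?thesis by blast
qed

lemma ex_index_atLeastLessThan:
  fixes f :: "nat \<Rightarrow> 'a::linorder"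
  assumes "f 0 \<le> x" "x < f n"
  shows "\<exists>i\<in>{1..n}. x \<in> {f (i - 1)..<f i}"
proof -
  define i where "i = (LEAST i. x < f i)"
  have xi: "x < f i" unfolding i_def by (rule LeastI[of _ n]) (rule assms(2))
  have "i \<le> n" unfolding i_def by (rule Least_le) (rule assms(2))
  have "i \<noteq> 0" using xi assms(1) by (metis not_less)
  have "\<not> x < f (i - 1)"
  proof
    assume "x < f (i - 1)"
    then have "i \<le> i - 1" unfolding i_def by (rule Least_le)
    then show False using \<open>i \<noteq> 0\<close> by simp
  qed
  then show ?thesis using xi \<open>i \<le> n\<close> \<open>i \<noteq> 0\<close> by (intro bexI[of _ i]) auto
qed

lemma ex_index_greaterThanAtMost:
  fixes f :: "nat \<Rightarrow> 'a::linorder"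
  assumes "f 0 < x" "x \<le> f n"
  shows "\<exists>i\<in>{1..n}. x \<in> {f (i - 1)<..f i}"
proof -
  define i where "i = (LEAST i. x \<le> f i)"
  have xi: "x \<le> f i" unfolding i_def by (rule LeastI[of _ n]) (rule assms(2))
  have "i \<le> n" unfolding i_def by (rule Least_le) (rule assms(2))
  have "i \<noteq> 0" using xi assms(1) by (metis not_less)
  have "\<not> x \<le> f (i - 1)"
  proof
    assume "x \<le> f (i - 1)"
    then have "i \<le> i - 1" unfolding i_def by (rule Least_le)
    then show False using \<open>i \<noteq> 0\<close> by simp
  qed
  then show ?thesis using xi \<open>i \<le> n\<close> \<open>i \<noteq> 0\<close> by (intro bexI[of _ i]) auto
qed

lemma first_difference:
  fixes \<alpha> \<beta> :: "int \<Rightarrow> 'a"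
  assumes "\<alpha> \<noteq> \<beta>" and agree: "\<forall>i. \<bar>i\<bar> \<ge> int N \<longrightarrow> \<alpha> i = \<beta> i"
  obtains f where "\<bar>f\<bar> < int N" "\<alpha> f \<noteq> \<beta> f" "\<And>k. k < f \<Longrightarrow> \<alpha> k = \<beta> k"
proof -
  define S where "S = {m::nat. \<alpha> (int m - int N) \<noteq> \<beta> (int m - int N)}"
  obtain k where "\<alpha> k \<noteq> \<beta> k" using assms(1) by blast
  moreover have "\<bar>k\<bar> < int N" using calculation agree by force
  ultimately have "nat (k + int N) \<in> S" unfolding S_def by (simp add: abs_less_iff)
  then have m0: "(LEAST m. m \<in> S) \<in> S" by (rule LeastI)
  define f where "f = int (LEAST m. m \<in> S) - int N"
  have "\<alpha> f \<noteq> \<beta> f" using m0 unfolding S_def f_def by simp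
  moreover have "\<alpha> k = \<beta> k" if "k < f" for k
  proof (cases "k \<le> - int N")
    case False
    then have "nat (k + int N) < (LEAST m. m \<in> S)" using that unfolding f_def by auto
    then have "nat (k + int N) \<notin> S" by (rule not_less_Least)
    then show ?thesis using False unfolding S_def by auto
  qed (use agree in auto)
  moreover have "\<bar>f\<bar> < int N" using \<open>\<alpha> f \<noteq> \<beta> f\<close> agree by force
  ultimately show thesis using that by blast
qed

lemma funpow_apply_funpow: "(f ^^ j) ((f ^^ k) x) = (f ^^ (j + k)) x"
  by (simp add: funpow_add)

lemma close_pair_in_unit_interval:
  fixes s :: "nat \<Rightarrow> real"
  assumes s: "\<And>j. 0 \<le> s j \<and> s j < 1" and l: "l > 0"
  obtains j k where "j < k" "\<bar>s j - s k\<bar> < l"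
proof -
  define B where "B = nat \<lfloor>1 / l\<rfloor>"
  define h where "h j = nat \<lfloor>s j / l\<rfloor>" for j
  have "h j \<le> B" for j
  proof -
    have "s j / l \<le> 1 / l" using s[of j] l by (simp add: divide_right_mono)
    then show ?thesis unfolding h_def B_def by (intro nat_mono floor_mono)
  qed
  then have "card (h ` {0..Suc B}) \<le> card {0..B}" by (intro card_mono) auto
  then have "\<not> inj_on h {0..Suc B}" by (intro pigeonhole) simp
  then obtain j k where jk: "j \<noteq> k" "h j = h k" unfolding inj_on_def by blast
  have close: "\<bar>s j - s k\<bar> < l" if "h j = h k" for j k
  proof -
    define x where "x = s j / l"
    define y where "y = s k / l"
    have "0 \<le> x" "0 \<le> y" using s[of j] s[of k] l unfolding x_def y_def by auto
    then have fl: "\<lfloor>x\<rfloor> = \<lfloor>y\<rfloor>" using that unfolding h_def x_def y_def by (simp add: eq_nat_nat_iff)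
    have "of_int \<lfloor>x\<rfloor> \<le> y" "y < of_int \<lfloor>x\<rfloor> + 1" using floor_eq_iff fl by auto
    then have "\<bar>x - y\<bar> < 1" using of_int_floor_le[of x] real_of_int_floor_add_one_gt[of x] by linarith
    moreover have "\<bar>s j - s k\<bar> = \<bar>x - y\<bar> * l"
      using l unfolding x_def y_def by (simp add: abs_mult flip: diff_divide_distrib)
    ultimately show ?thesis using l by simp
  qed
  show thesis
  proof (cases "j < k")
    case True
    then show ?thesis using that close jk by blast
  next
    case False
    then have "k < j" using jk by auto
    then show ?thesis using that close[of k j] jk by (simp add: abs_minus_commute)
  qed
qed

lemma grid_cell_within:
  fixes h u v :: real
  assumes h: "h > 0" and uv: "0 \<le> u" "u + 2 * h \<le> v" "v \<le> 1"
  obtains g :: nat where "u \<le> real g * h" "real (Suc g) * h \<le> v" "g \<le> nat \<lceil>1 / h\<rceil>"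
proof
  define g where "g = nat \<lceil>u / h\<rceil>"
  have g: "real g = \<lceil>u / h\<rceil>" unfolding g_def using uv h by auto
  show "u \<le> real g * h" using g h by (metis le_of_int_ceiling pos_divide_le_eq)
  have "real g < u / h + 1" using g by linarith
  then have "real g * h < u + h" using h by (simp add: field_simps)
  then show gs: "real (Suc g) * h \<le> v" using uv by (simp add: distrib_right)
  then have "real g < 1 / h" using h uv by (simp add: field_simps)
  then have "int g \<le> \<lceil>1 / h\<rceil>" using le_of_int_ceiling[of "1 / h"] by linarith
  then show "g \<le> nat \<lceil>1 / h\<rceil>" by auto
qed

locale iet =
  fixes n :: nat and a :: "nat \<Rightarrow> real" and tau :: "nat \<Rightarrow> nat"
  assumes n2: "n \<ge> 2"
    and a_pos: "\<forall>i\<in>{1..n}. a i > 0"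
    and a_sum: "(\<Sum>i=1..n. a i) = 1"
    and perm: "tau permutes {1..n}"
begin

abbreviation "b \<equiv> iet_b a"
abbreviation "bt \<equiv> iet_btau a tau"
abbreviation "T \<equiv> iet_T n a tau"
abbreviation "J \<equiv> iet_J a"
abbreviation "D \<equiv> iet_D n a"

lemma tau_in: "i \<in> {1..n} \<Longrightarrow> tau i \<in> {1..n}"
  using permutes_in_image[OF perm] by blast

lemma inv_tau_in: "i \<in> {1..n} \<Longrightarrow> inv tau i \<in> {1..n}"
  using permutes_in_image[OF permutes_inv[OF perm]] by blast

lemma tau_inv_tau: "tau (inv tau x) = x"
  using permutes_inverses[OF perm] by blast

lemma inv_tau_tau: "inv tau (tau x) = x"
  using permutes_inverses[OF perm] by blast

lemma tau_eq_iff: "tau x = tau y \<longleftrightarrow> x = y"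
  by (metis inv_tau_tau)

lemma b_0: "b 0 = 0"
  by (simp add: iet_b_def)

lemma bt_0: "bt 0 = 0"
  by (simp add: iet_btau_def)

lemma b_n: "b n = 1"
  using a_sum by (simp add: iet_b_def)

lemma bt_n: "bt n = 1"
proof -
  have "bt n = sum (a \<circ> inv tau) {1..n}" by (simp add: iet_btau_def comp_def)
  also have "\<dots> = sum a {1..n}" by (rule sum.permute[symmetric, OF permutes_inv[OF perm]])
  finally show ?thesis using a_sum by simp
qed

lemma b_Suc: "b (Suc i) = b i + a (Suc i)"
  by (simp add: iet_b_def)

lemma bt_Suc: "bt (Suc i) = bt i + a (inv tau (Suc i))"
  by (simp add: iet_btau_def)

lemma b_less: "i < j \<Longrightarrow> j \<le> n \<Longrightarrow> b i < b j"
  unfolding iet_b_def by (rule sum_strict_mono2[of _ _ j]) (auto intro!: less_imp_le a_pos[rule_format])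

lemma bt_less: "i < j \<Longrightarrow> j \<le> n \<Longrightarrow> bt i < bt j"
  unfolding iet_btau_def by (rule sum_strict_mono2[of _ _ j]) (auto intro!: less_imp_le a_pos[rule_format] inv_tau_in)

lemma b_le: "i \<le> j \<Longrightarrow> j \<le> n \<Longrightarrow> b i \<le> b j"
  using b_less by (cases "i = j") (auto intro: less_imp_le)

lemma bt_le: "i \<le> j \<Longrightarrow> j \<le> n \<Longrightarrow> bt i \<le> bt j"
  using bt_less by (cases "i = j") (auto intro: less_imp_le)

lemma bt_eq_iff: "i \<le> n \<Longrightarrow> j \<le> n \<Longrightarrow> bt i = bt j \<longleftrightarrow> i = j"
  using bt_less[of i j] bt_less[of j i] by (cases i j rule: linorder_cases) auto

lemma b_bounds: "i \<le> n \<Longrightarrow> 0 \<le> b i \<and> b i \<le> 1"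
  using b_le[of 0 i] b_le[of i n] b_0 b_n by auto

lemma bt_bounds: "i \<le> n \<Longrightarrow> 0 \<le> bt i \<and> bt i \<le> 1"
  using bt_le[of 0 i] bt_le[of i n] bt_0 bt_n by auto

lemma bt_tau: "i \<in> {1..n} \<Longrightarrow> bt (tau i) = bt (tau i - 1) + a i"
  using bt_Suc[of "tau i - 1"] tau_in[of i] by (simp add: inv_tau_tau)

lemma D_bounds: "d \<in> D \<Longrightarrow> 0 < d \<and> d < 1"
  unfolding iet_D_def using b_less[of 0] b_less[of _ n] b_0 b_n by fastforce

lemma b_in_D: "i \<in> {1..n-1} \<Longrightarrow> b i \<in> D"
  unfolding iet_D_def by blast

lemma J_unique: "i \<in> {1..n} \<Longrightarrow> k \<in> {1..n} \<Longrightarrow> x \<in> J i \<Longrightarrow> x \<in> J k \<Longrightarrow> i = k"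
proof (induction i k rule: linorder_wlog)
  case (le i k)
  show ?case
  proof (rule ccontr)
    assume "i \<noteq> k"
    then have "b i \<le> b (k - 1)" using le by (intro b_le) auto
    then show False using le by (auto simp: iet_J_def)
  qed
qed auto

lemma J_exists: "0 \<le> x \<Longrightarrow> x < 1 \<Longrightarrow> \<exists>i\<in>{1..n}. x \<in> J i"
  using ex_index_atLeastLessThan[of b x n] b_0 b_n by (simp add: iet_J_def)

lemma J_bounds: "i \<in> {1..n} \<Longrightarrow> x \<in> J i \<Longrightarrow> 0 \<le> x \<and> x < 1"
  using b_bounds[of "i - 1"] b_bounds[of i] unfolding iet_J_def by force

lemma T_J: "i \<in> {1..n} \<Longrightarrow> x \<in> J i \<Longrightarrow> T x = x - b (i - 1) + bt (tau i - 1)"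
proof -
  assume i: "i \<in> {1..n}" "x \<in> J i"
  have "(THE i. i \<in> {1..n} \<and> x \<in> J i) = i"
    using i J_unique by (intro the_equality) auto
  then show ?thesis using i unfolding iet_T_def by (auto simp: Let_def)
qed

lemma T_J_bounds: "i \<in> {1..n} \<Longrightarrow> x \<in> J i \<Longrightarrow> bt (tau i - 1) \<le> T x \<and> T x < bt (tau i)"
  using T_J bt_tau b_Suc[of "i - 1"] by (auto simp: iet_J_def)

lemma T_b: "i \<in> {1..n} \<Longrightarrow> T (b (i - 1)) = bt (tau i - 1)"
  using T_J[of i "b (i - 1)"] b_less[of "i - 1" i] by (auto simp: iet_J_def)

lemma T_bounds: "0 \<le> x \<Longrightarrow> x < 1 \<Longrightarrow> 0 \<le> T x \<and> T x < 1"
proof -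
  assume "0 \<le> x" "x < 1"
  then obtain i where i: "i \<in> {1..n}" "x \<in> J i" using J_exists by blast
  then have "tau i \<in> {1..n}" using tau_in by blast
  then have "tau i - 1 \<le> n" "tau i \<le> n" by auto
  then show ?thesis using T_J_bounds[OF i] bt_bounds[of "tau i - 1"] bt_bounds[of "tau i"] by linarith
qed

lemma funpow_T_bounds: "0 \<le> x \<Longrightarrow> x < 1 \<Longrightarrow> 0 \<le> (T ^^ j) x \<and> (T ^^ j) x < 1"
  by (induction j) (auto simp: T_bounds)

lemma T_inj: "0 \<le> x \<Longrightarrow> x < 1 \<Longrightarrow> 0 \<le> y \<Longrightarrow> y < 1 \<Longrightarrow> T x = T y \<Longrightarrow> x = y"
proof -
  assume xy: "0 \<le> x" "x < 1" "0 \<le> y" "y < 1" "T x = T y"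
  obtain i where i: "i \<in> {1..n}" "x \<in> J i" using J_exists xy by blast
  obtain k where k: "k \<in> {1..n}" "y \<in> J k" using J_exists xy by blast
  have ti: "tau i \<in> {1..n}" "tau k \<in> {1..n}" using i k tau_in by auto
  have "tau i = tau k"
  proof (rule ccontr)
    assume "tau i \<noteq> tau k"
    then consider "tau i < tau k" | "tau k < tau i" by linarith
    then show False
    proof cases
      case 1
      then have "bt (tau i) \<le> bt (tau k - 1)" using ti by (intro bt_le) auto
      then show False using T_J_bounds[OF i] T_J_bounds[OF k] xy by linarith
    next
      case 2
      then have "bt (tau k) \<le> bt (tau i - 1)" using ti by (intro bt_le) auto
      then show False using T_J_bounds[OF i] T_J_bounds[OF k] xy by linarith
    qed
  qed
  then have "i = k" by (simp only: tau_eq_iff)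
  then have "T y = y - b (i - 1) + bt (tau i - 1)" using T_J[OF k] by simp
  then show ?thesis using T_J[OF i] xy(5) by linarith
qed

lemma funpow_T_inj:
  "0 \<le> x \<Longrightarrow> x < 1 \<Longrightarrow> 0 \<le> y \<Longrightarrow> y < 1 \<Longrightarrow> (T^^j) x = (T^^j) y \<Longrightarrow> x = y"
proof (induction j)
  case (Suc j)
  then have "T ((T^^j) x) = T ((T^^j) y)" by simp
  then have "(T^^j) x = (T^^j) y" using T_inj funpow_T_bounds Suc.prems by blast
  then show ?case using Suc by blast
qed simp

lemma finite_funpow_T_preimage: "finite S \<Longrightarrow> finite ((T^^j) -` S \<inter> {0..<1})"
proof (rule finite_vimage_IntI)
  show "inj_on (T^^j) {0..<1}" by (rule inj_onI) (use funpow_T_inj in auto)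
qed

lemma T_surj: "0 \<le> y \<Longrightarrow> y < 1 \<Longrightarrow> \<exists>x. 0 \<le> x \<and> x < 1 \<and> T x = y"
proof -
  assume y: "0 \<le> y" "y < 1"
  obtain m where m: "m \<in> {1..n}" "bt (m - 1) \<le> y" "y < bt m"
    using ex_index_atLeastLessThan[of bt y n] bt_0 bt_n y by auto
  define i where "i = inv tau m"
  have i: "i \<in> {1..n}" "tau i = m" using m inv_tau_in tau_inv_tau i_def by auto
  define x where "x = y - bt (m - 1) + b (i - 1)"
  have x: "x \<in> J i" using bt_tau[OF i(1)] i m b_Suc[of "i - 1"] by (auto simp: x_def iet_J_def)
  then have "T x = y" using T_J[OF i(1)] i by (simp add: x_def)
  then show ?thesis using J_bounds[OF i(1) x] by blast
qed

definition e :: real where "e = b (inv tau 1 - 1)"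

lemma T_e: "T e = 0"
  using T_b[of "inv tau 1"] inv_tau_in[of 1] n2 by (simp add: e_def tau_inv_tau bt_0)

lemma e_bounds: "0 \<le> e \<and> e < 1"
  using b_bounds[of "inv tau 1 - 1"] b_less[of "inv tau 1 - 1" n] inv_tau_in[of 1] n2 b_n
  by (auto simp: e_def)

lemma T_eq_0_iff: "0 \<le> x \<Longrightarrow> x < 1 \<Longrightarrow> T x = 0 \<longleftrightarrow> x = e"
  using T_inj[of x e] e_bounds T_e by auto

lemma bt_eq_T_b: "k < n \<Longrightarrow> bt k = T (b (inv tau (Suc k) - 1))"
  using T_b[of "inv tau (Suc k)"] inv_tau_in[of "Suc k"] by (simp add: tau_inv_tau)

subsection \<open>Rigid motion along common itineraries\<close>

definition same_interval :: "real \<Rightarrow> real \<Rightarrow> bool" where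
  "same_interval p q \<longleftrightarrow> (\<exists>i\<in>{1..n}. p \<in> J i \<and> q \<in> J i)"

lemma same_interval_sym: "same_interval p q \<Longrightarrow> same_interval q p"
  unfolding same_interval_def by blast

lemma same_interval_trans: "same_interval p q \<Longrightarrow> same_interval q r \<Longrightarrow> same_interval p r"
  unfolding same_interval_def using J_unique by blast

lemma same_interval_between: "same_interval p q \<Longrightarrow> p \<le> z \<Longrightarrow> z \<le> q \<Longrightarrow> same_interval p z"
  unfolding same_interval_def iet_J_def by auto

lemma same_interval_T: "same_interval p q \<Longrightarrow> T q - T p = q - p"
  unfolding same_interval_def using T_J by fastforce

lemma not_same_interval_crosses_D:
  assumes "0 \<le> p" "p \<le> q" "q < 1" "\<not> same_interval p q"
  shows "\<exists>i\<in>{1..n-1}. p < b i \<and> b i \<le> q"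
proof -
  obtain i where i: "i \<in> {1..n}" "p \<in> J i" using J_exists assms by fastforce
  have "\<not> q < b i"
    using i assms unfolding same_interval_def iet_J_def by auto
  then have "i \<noteq> n" using b_n assms by auto
  then show ?thesis using i \<open>\<not> q < b i\<close> unfolding iet_J_def by (intro bexI[of _ i]) auto
qed

lemma funpow_T_translate:
  assumes "0 \<le> u" "u \<le> v" "v < 1" "\<forall>j<m. same_interval ((T^^j) u) ((T^^j) v)"
    and "u \<le> z" "z \<le> v"
  shows "(T^^m) z = (T^^m) u + (z - u) \<and> (\<forall>j<m. same_interval ((T^^j) u) ((T^^j) z))"
  using assms(4-6)
proof (induction m arbitrary: z)
  case (Suc m)
  have hyp: "\<forall>j<m. same_interval ((T^^j) u) ((T^^j) v)" using Suc.prems by auto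
  have z: "(T^^m) z = (T^^m) u + (z - u)" "\<forall>j<m. same_interval ((T^^j) u) ((T^^j) z)"
    using Suc.IH[OF hyp Suc.prems(2,3)] by auto
  have v: "(T^^m) v = (T^^m) u + (v - u)" using Suc.IH[OF hyp, of v] assms(2) by auto
  have same: "same_interval ((T^^m) u) ((T^^m) z)"
    using same_interval_between[of "(T^^m) u" "(T^^m) v"] Suc.prems z(1) v by auto
  then have "(T^^Suc m) z = (T^^Suc m) u + (z - u)" using same_interval_T[OF same] z(1) by simp
  then show ?case using z(2) same less_Suc_eq by auto
qed simp

lemma funpow_T_diff:
  assumes "0 \<le> u" "u < 1" "0 \<le> v" "v < 1" "\<forall>j<m. same_interval ((T^^j) u) ((T^^j) v)"
  shows "(T^^m) u - (T^^m) v = u - v"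
proof (cases "u \<le> v")
  case True
  then show ?thesis using funpow_T_translate[OF assms(1) True assms(4,5), of v] by auto
next
  case False
  have "\<forall>j<m. same_interval ((T^^j) v) ((T^^j) u)" using assms(5) same_interval_sym by blast
  then show ?thesis using funpow_T_translate[OF assms(3), of u m u] False assms by auto
qed

definition stable_interval :: "real \<Rightarrow> real \<Rightarrow> bool" where
  "stable_interval lo hi \<longleftrightarrow>
     0 \<le> lo \<and> lo < hi \<and> hi < 1 \<and> (\<forall>j. same_interval ((T^^j) lo) ((T^^j) hi))"

lemma stable_interval_translate:
  "stable_interval lo hi \<Longrightarrow> lo \<le> z \<Longrightarrow> z \<le> hi \<Longrightarrow>
    (T^^m) z = (T^^m) lo + (z - lo) \<and> (\<forall>j<m. same_interval ((T^^j) lo) ((T^^j) z))"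
  unfolding stable_interval_def by (intro funpow_T_translate) auto

lemma stable_interval_same:
  "stable_interval lo hi \<Longrightarrow> lo \<le> z \<Longrightarrow> z \<le> hi \<Longrightarrow> same_interval ((T^^q) lo) ((T^^q) z)"
  using stable_interval_translate[of lo hi z "Suc q"] by auto

lemma stable_interval_funpow:
  assumes "stable_interval lo hi"
  shows "stable_interval ((T^^m) lo) ((T^^m) lo + (hi - lo))"
proof -
  have hi: "(T^^m) hi = (T^^m) lo + (hi - lo)"
    using stable_interval_translate[OF assms, of hi m] assms unfolding stable_interval_def by auto
  have "(T^^m) lo < (T^^m) lo + (hi - lo)" using assms unfolding stable_interval_def by simp
  then show ?thesis
    using assms funpow_T_bounds[of lo m] funpow_T_bounds[of hi m]
    unfolding stable_interval_def hi[symmetric] funpow_apply_funpow by auto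
qed

lemma stable_interval_extend:
  assumes st: "stable_interval lo hi" and tp: "(T^^p) lo = lo + t"
    and t: "t \<noteq> 0" "\<bar>t\<bar> \<le> hi - lo"
  shows "\<exists>lo' hi'. stable_interval lo' hi' \<and> (T^^p) lo' = lo' + t \<and> hi' - lo' = hi - lo + \<bar>t\<bar>"
proof -
  have rng: "0 \<le> lo" "lo < hi" "hi < 1" using st unfolding stable_interval_def by auto
  have tphi: "(T^^p) hi = hi + t" using stable_interval_translate[OF st, of hi p] rng tp by auto
  have r1: "0 \<le> lo + t \<and> lo + t < 1" using funpow_T_bounds[of lo p] rng tp by auto
  have r2: "0 \<le> hi + t \<and> hi + t < 1" using funpow_T_bounds[of hi p] rng tphi by auto
  have image: "same_interval ((T^^q) (lo + t)) ((T^^q) (hi + t))" for q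
    using st unfolding stable_interval_def tp[symmetric] tphi[symmetric] funpow_apply_funpow by blast
  show ?thesis
  proof (cases "t > 0")
    case True
    have "same_interval ((T^^q) lo) ((T^^q) (hi + t))" for q
    proof -
      have "same_interval ((T^^q) lo) ((T^^q) (lo + t))"
        using stable_interval_same[OF st, of "lo + t" q] True t by simp
      then show ?thesis using image[of q] by (rule same_interval_trans)
    qed
    then have "stable_interval lo (hi + t)" using rng r2 True unfolding stable_interval_def by simp
    then show ?thesis using tp True by (intro exI[of _ lo] exI[of _ "hi + t"]) auto
  next
    case False
    then have tn: "t < 0" using t by auto
    have "same_interval ((T^^q) (lo + t)) ((T^^q) hi)" for q
    proof -
      have "same_interval ((T^^q) lo) ((T^^q) (hi + t))"
        using stable_interval_same[OF st, of "hi + t" q] tn t by simp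
      moreover have "same_interval ((T^^q) lo) ((T^^q) hi)"
        using stable_interval_same[OF st, of hi q] rng by simp
      ultimately have "same_interval ((T^^q) (hi + t)) ((T^^q) hi)"
        using same_interval_sym same_interval_trans by blast
      with image[of q] show ?thesis by (rule same_interval_trans)
    qed
    then have st': "stable_interval (lo + t) hi" using rng r1 tn unfolding stable_interval_def by simp
    have "(T^^p) lo = (T^^p) (lo + t) - t"
      using stable_interval_translate[OF st', of lo p] tn rng by auto
    then have "(T^^p) (lo + t) = (lo + t) + t" using tp by linarith
    then show ?thesis using st' tn by (intro exI[of _ "lo + t"] exI[of _ hi]) auto
  qed
qed

lemma stable_interval_extend_funpow:
  assumes st: "stable_interval lo hi" and tp: "(T^^p) lo = lo + t"
    and t: "t \<noteq> 0" "\<bar>t\<bar> \<le> hi - lo"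
  shows "\<exists>lo' hi'. stable_interval lo' hi' \<and> (T^^p) lo' = lo' + t \<and> hi' - lo' = hi - lo + real m * \<bar>t\<bar>"
proof (induction m)
  case (Suc m)
  then obtain lo' hi' where h: "stable_interval lo' hi'" "(T^^p) lo' = lo' + t"
    "hi' - lo' = hi - lo + real m * \<bar>t\<bar>"
    by blast
  have "\<bar>t\<bar> \<le> hi' - lo'" using h(3) t by (simp add: add_increasing2)
  then obtain lo2 hi2 where "stable_interval lo2 hi2" "(T^^p) lo2 = lo2 + t" "hi2 - lo2 = hi' - lo' + \<bar>t\<bar>"
    using stable_interval_extend[OF h(1,2) t(1)] by blast
  then show ?case using h(3) by (intro exI[of _ lo2] exI[of _ hi2]) (auto simp: algebra_simps)
qed (use st tp in auto)

lemma eventually_funpow_T_right: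
  "0 \<le> z \<Longrightarrow> z < 1 \<Longrightarrow> \<forall>\<^sub>F \<delta> in at_right 0. (T^^m) (z + \<delta>) = (T^^m) z + \<delta>"
proof (induction m)
  case (Suc m)
  define w where "w = (T^^m) z"
  obtain i where i: "i \<in> {1..n}" "w \<in> J i"
    using J_exists funpow_T_bounds Suc.prems unfolding w_def by blast
  have "\<forall>\<^sub>F \<delta> in at_right 0. \<delta> < b i - w"
    using i unfolding eventually_at_right_field iet_J_def by (intro exI[of _ "b i - w"]) auto
  with Suc.IH[OF Suc.prems] eventually_at_right_less show ?case
  proof eventually_elim
    case (elim \<delta>)
    have "w + \<delta> \<in> J i" using i elim(2,3) unfolding iet_J_def by auto
    then show ?case using T_J[OF i(1)] T_J[OF i] elim(1) by (simp add: w_def)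
  qed
qed simp

subsection \<open>The dual map\<close>

definition Jd :: "nat \<Rightarrow> real set" where
  "Jd i = {b (i - 1)<..b i}"

definition Td :: "real \<Rightarrow> real" where
  "Td z = (let i = (THE i. i \<in> {1..n} \<and> z \<in> Jd i) in z - b (i - 1) + bt (tau i - 1))"

lemma Jd_unique: "i \<in> {1..n} \<Longrightarrow> k \<in> {1..n} \<Longrightarrow> x \<in> Jd i \<Longrightarrow> x \<in> Jd k \<Longrightarrow> i = k"
proof (induction i k rule: linorder_wlog)
  case (le i k)
  show ?case
  proof (rule ccontr)
    assume "i \<noteq> k"
    then have "b i \<le> b (k - 1)" using le by (intro b_le) auto
    then show False using le by (auto simp: Jd_def)
  qed
qed auto

lemma Jd_exists: "0 < x \<Longrightarrow> x \<le> 1 \<Longrightarrow> \<exists>i\<in>{1..n}. x \<in> Jd i"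
  using ex_index_greaterThanAtMost[of b x n] b_0 b_n by (simp add: Jd_def)

lemma Td_J: "i \<in> {1..n} \<Longrightarrow> x \<in> Jd i \<Longrightarrow> Td x = x - b (i - 1) + bt (tau i - 1)"
proof -
  assume i: "i \<in> {1..n}" "x \<in> Jd i"
  have "(THE i. i \<in> {1..n} \<and> x \<in> Jd i) = i"
    using i Jd_unique by (intro the_equality) auto
  then show ?thesis unfolding Td_def by (simp add: Let_def)
qed

lemma Td_J_bounds: "i \<in> {1..n} \<Longrightarrow> x \<in> Jd i \<Longrightarrow> bt (tau i - 1) < Td x \<and> Td x \<le> bt (tau i)"
  using Td_J bt_tau b_Suc[of "i - 1"] by (auto simp: Jd_def)

lemma Td_bounds: "0 < x \<Longrightarrow> x \<le> 1 \<Longrightarrow> 0 < Td x \<and> Td x \<le> 1"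
proof -
  assume "0 < x" "x \<le> 1"
  then obtain i where i: "i \<in> {1..n}" "x \<in> Jd i" using Jd_exists by blast
  then have "tau i \<in> {1..n}" using tau_in by blast
  then have "tau i - 1 \<le> n" "tau i \<le> n" by auto
  then show ?thesis using Td_J_bounds[OF i] bt_bounds[of "tau i - 1"] bt_bounds[of "tau i"] by linarith
qed

lemma funpow_Td_bounds: "0 < x \<Longrightarrow> x \<le> 1 \<Longrightarrow> 0 < (Td ^^ j) x \<and> (Td ^^ j) x \<le> 1"
  by (induction j) (auto simp: Td_bounds)

lemma Td_inj: "0 < x \<Longrightarrow> x \<le> 1 \<Longrightarrow> 0 < y \<Longrightarrow> y \<le> 1 \<Longrightarrow> Td x = Td y \<Longrightarrow> x = y"
proof -
  assume xy: "0 < x" "x \<le> 1" "0 < y" "y \<le> 1" "Td x = Td y"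
  obtain i where i: "i \<in> {1..n}" "x \<in> Jd i" using Jd_exists xy by blast
  obtain k where k: "k \<in> {1..n}" "y \<in> Jd k" using Jd_exists xy by blast
  have ti: "tau i \<in> {1..n}" "tau k \<in> {1..n}" using i k tau_in by auto
  have "tau i = tau k"
  proof (rule ccontr)
    assume "tau i \<noteq> tau k"
    then consider "tau i < tau k" | "tau k < tau i" by linarith
    then show False
    proof cases
      case 1
      then have "bt (tau i) \<le> bt (tau k - 1)" using ti by (intro bt_le) auto
      then show False using Td_J_bounds[OF i] Td_J_bounds[OF k] xy by linarith
    next
      case 2
      then have "bt (tau k) \<le> bt (tau i - 1)" using ti by (intro bt_le) auto
      then show False using Td_J_bounds[OF i] Td_J_bounds[OF k] xy by linarith
    qed
  qed
  then have "i = k" by (simp only: tau_eq_iff)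
  then have "Td y = y - b (i - 1) + bt (tau i - 1)" using Td_J[OF k] by simp
  then show ?thesis using Td_J[OF i] xy(5) by linarith
qed

lemma Td_b: "i \<in> {1..n} \<Longrightarrow> Td (b i) = bt (tau i)"
  using Td_J[of i "b i"] bt_tau[of i] b_Suc[of "i - 1"] b_less[of "i - 1" i] by (auto simp: Jd_def)

lemma T_eq_Td: "0 < z \<Longrightarrow> z < 1 \<Longrightarrow> z \<notin> D \<Longrightarrow> T z = Td z"
proof -
  assume z: "0 < z" "z < 1" "z \<notin> D"
  obtain i where i: "i \<in> {1..n}" "z \<in> J i" using J_exists[of z] z by auto
  have "z \<noteq> b (i - 1)"
  proof
    assume zb: "z = b (i - 1)"
    then have "i \<noteq> 1" using z(1) b_0 by auto
    then show False using zb z(3) b_in_D[of "i - 1"] i by force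
  qed
  then have "z \<in> Jd i" using i unfolding iet_J_def Jd_def by auto
  then show ?thesis using T_J[OF i] Td_J[OF i(1)] by simp
qed

text \<open>Td is the left limit of T: points just left of z follow the Td-orbit of z.\<close>

lemma eventually_funpow_T_left:
  "0 < z \<Longrightarrow> z \<le> 1 \<Longrightarrow> \<forall>\<^sub>F \<delta> in at_right 0. (T^^m) (z - \<delta>) = (Td^^m) z - \<delta>"
proof (induction m)
  case (Suc m)
  define w where "w = (Td^^m) z"
  obtain i where i: "i \<in> {1..n}" "w \<in> Jd i"
    using Jd_exists funpow_Td_bounds Suc.prems unfolding w_def by blast
  have "\<forall>\<^sub>F \<delta> in at_right 0. \<delta> < w - b (i - 1)"
    using i unfolding eventually_at_right_field Jd_def by (intro exI[of _ "w - b (i - 1)"]) auto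
  with Suc.IH[OF Suc.prems] eventually_at_right_less show ?case
  proof eventually_elim
    case (elim \<delta>)
    have "w - \<delta> \<in> J i" using i elim(2,3) unfolding Jd_def iet_J_def by auto
    then show ?case using T_J[OF i(1)] Td_J[OF i] elim(1) by (simp add: w_def)
  qed
qed simp

definition J_index :: "real \<Rightarrow> nat" where
  "J_index z = (THE i. i \<in> {1..n} \<and> z \<in> J i)"

lemma J_index_mem: "0 \<le> z \<Longrightarrow> z < 1 \<Longrightarrow> J_index z \<in> {1..n} \<and> z \<in> J (J_index z)"
  unfolding J_index_def by (rule theI') (use J_exists J_unique in blast)

lemma same_interval_iff_J_index:
  "0 \<le> p \<Longrightarrow> p < 1 \<Longrightarrow> 0 \<le> q \<Longrightarrow> q < 1 \<Longrightarrow> same_interval p q \<longleftrightarrow> J_index p = J_index q"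
  using J_index_mem[of p] J_index_mem[of q] J_unique unfolding same_interval_def by metis

definition T_inv :: "real \<Rightarrow> real" where
  "T_inv = inv_into {0..<1} T"

lemma T_inv_right_inverse: "0 \<le> y \<Longrightarrow> y < 1 \<Longrightarrow> 0 \<le> T_inv y \<and> T_inv y < 1 \<and> T (T_inv y) = y"
  using T_surj inv_into_into[of y T "{0..<1}"] f_inv_into_f[of y T "{0..<1}"]
  unfolding T_inv_def by force

lemma funpow_T_inv_bounds: "0 \<le> y \<Longrightarrow> y < 1 \<Longrightarrow> 0 \<le> (T_inv^^m) y \<and> (T_inv^^m) y < 1"
  by (induction m) (auto simp: T_inv_right_inverse)

lemma funpow_T_funpow_T_inv:
  "j \<le> m \<Longrightarrow> 0 \<le> y \<Longrightarrow> y < 1 \<Longrightarrow> (T^^j) ((T_inv^^m) y) = (T_inv^^(m - j)) y"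
proof (induction j)
  case (Suc j)
  have "(T_inv^^(m - j)) y = T_inv ((T_inv^^(m - Suc j)) y)"
    using Suc.prems by (metis Suc_diff_Suc comp_apply funpow.simps(2) less_eq_Suc_le)
  then show ?case using Suc T_inv_right_inverse funpow_T_inv_bounds by simp
qed simp

lemma funpow_T_inv_eq_Tpow:
  assumes "0 \<le> x" "x < 1"
  shows "(T^^j) ((T_inv^^m) x) = iet_Tpow n a tau (int j - int m) x"
proof (cases "j \<le> m")
  case True
  then show ?thesis
    using funpow_T_funpow_T_inv[OF True assms]
    by (cases "j = m") (auto simp: iet_Tpow_def T_inv_def nat_diff_distrib)
next
  case False
  then have "j = (j - m) + m" by simp
  then have "(T^^j) ((T_inv^^m) x) = (T^^(j - m)) ((T^^m) ((T_inv^^m) x))"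
    by (metis funpow_add comp_apply)
  also have "(T^^m) ((T_inv^^m) x) = x" using funpow_T_funpow_T_inv[of m m x] assms by simp
  finally show ?thesis using False unfolding iet_Tpow_def by (simp add: nat_diff_distrib)
qed

lemma X_window_realised:
  assumes "\<alpha> \<in> iet_X n a tau"
  obtains x where "0 \<le> x" "x < 1"
    "\<And>j. j \<le> 2 * m \<Longrightarrow> J_index ((T^^j) x) = \<alpha> (int j - int m)"
proof -
  obtain \<gamma> where \<gamma>: "\<gamma> \<in> iet_itin n a tau ` iet_R n a tau" "\<forall>k\<in>{-int m..int m}. \<gamma> k = \<alpha> k"
    using closure_agrees_on_finite_window[of \<alpha> _ "{-int m..int m}"] assms unfolding iet_X_def by blast
  then obtain y where y: "y \<in> iet_R n a tau" "\<gamma> = iet_itin n a tau y" by blast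
  have "0 \<le> y" "y < 1" using y(1) unfolding iet_R_def iet_Dinf_def by auto
  then show ?thesis
    using that[of "(T_inv^^m) y"] funpow_T_inv_bounds \<gamma>(2) funpow_T_inv_eq_Tpow
    unfolding y(2) iet_itin_def J_index_def by auto
qed

lemma X_pair_window_realised:
  assumes "\<alpha> \<in> iet_X n a tau" "\<beta> \<in> iet_X n a tau"
  obtains x y where "0 \<le> x" "x < 1" "0 \<le> y" "y < 1"
    "\<And>j. j \<le> 2 * m \<Longrightarrow>
      same_interval ((T^^j) x) ((T^^j) y) \<longleftrightarrow> \<alpha> (int j - int m) = \<beta> (int j - int m)"
proof -
  obtain x where x: "0 \<le> x" "x < 1" "\<And>j. j \<le> 2 * m \<Longrightarrow> J_index ((T^^j) x) = \<alpha> (int j - int m)"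
    using X_window_realised[OF assms(1)] by blast
  obtain y where y: "0 \<le> y" "y < 1" "\<And>j. j \<le> 2 * m \<Longrightarrow> J_index ((T^^j) y) = \<beta> (int j - int m)"
    using X_window_realised[OF assms(2)] by blast
  show thesis
    by (rule that[OF x(1,2) y(1,2)]) (use same_interval_iff_J_index funpow_T_bounds x y in simp)
qed

end

subsection \<open>Consequences of the Keane condition\<close>

locale keane_iet = iet +
  assumes irreducible: "irreducible_perm n tau"
    and keane: "keane_condition n a tau"
begin

lemma keane_funpow_D: "d \<in> D \<Longrightarrow> k \<ge> 1 \<Longrightarrow> (T^^k) d \<notin> D"
  using keane unfolding keane_condition_def by blast

text \<open>Irreducibility (\<tau>(1) \<noteq> 1) is exactly what makes the preimage e of 0 a discontinuity.\<close>

lemma inv_tau_1_index: "inv tau 1 - 1 \<in> {1..n-1}"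
proof -
  have "1 \<in> {1..n-1}" using n2 by auto
  then have "tau ` {1..1} \<noteq> {1..1}" using irreducible unfolding irreducible_perm_def by blast
  then have "tau 1 \<noteq> 1" by simp
  then have "inv tau 1 \<noteq> 1" by (metis tau_inv_tau)
  then show ?thesis using inv_tau_in[of 1] n2 by auto
qed

lemma e_in_D: "e \<in> D"
  unfolding e_def by (rule b_in_D[OF inv_tau_1_index])

text \<open>
  The largest preimage of a discontinuity (or of 0) below x, within p steps, starts an interval
  [l, x] on which T^p is a translation.
\<close>

lemma rigid_left_extension:
  assumes x: "0 \<le> x" "x < 1" and p: "p \<ge> 1"
  obtains l where "0 \<le> l" "l \<le> x" "\<exists>j<p. (T^^j) l \<in> insert 0 D"
    "\<forall>j<p. same_interval ((T^^j) l) ((T^^j) x)"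
proof -
  define Bad where "Bad = {z. 0 \<le> z \<and> z \<le> x \<and> (\<exists>j<p. (T^^j) z \<in> insert 0 D)}"
  have "Bad \<subseteq> (\<Union>j<p. (T^^j) -` (insert 0 D) \<inter> {0..<1})"
    unfolding Bad_def using x by auto
  moreover have "finite (\<Union>j<p. (T^^j) -` (insert 0 D) \<inter> {0..<1})"
  proof (rule finite_UN_I)
    have "finite (insert 0 D)" unfolding iet_D_def by simp
    then show "finite ((T^^j) -` (insert 0 D) \<inter> {0..<1})" for j by (rule finite_funpow_T_preimage)
  qed simp
  ultimately have fin: "finite Bad" by (rule finite_subset)
  have "0 \<in> Bad" unfolding Bad_def using x p by (auto intro!: exI[of _ 0])
  define l where "l = Max Bad"
  have lB: "l \<in> Bad" unfolding l_def using fin \<open>0 \<in> Bad\<close> by (intro Max_in) auto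
  have lmax: "z \<in> Bad \<Longrightarrow> z \<le> l" for z unfolding l_def using fin by simp
  have l: "0 \<le> l" "l \<le> x" using lB unfolding Bad_def by auto
  have "m \<le> p \<Longrightarrow> \<forall>j<m. same_interval ((T^^j) l) ((T^^j) x)" for m
  proof (induction m)
    case (Suc m)
    have hyp: "\<forall>j<m. same_interval ((T^^j) l) ((T^^j) x)" using Suc by auto
    have shift: "(T^^m) z = (T^^m) l + (z - l)" if "l \<le> z" "z \<le> x" for z
      using funpow_T_translate[OF l x(2) hyp that] by blast
    have "same_interval ((T^^m) l) ((T^^m) x)"
    proof (rule ccontr)
      assume split: "\<not> same_interval ((T^^m) l) ((T^^m) x)"
      have r: "0 \<le> (T^^m) l" "(T^^m) l \<le> (T^^m) x" "(T^^m) x < 1"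
        using funpow_T_bounds[of l m] funpow_T_bounds[of x m] l x shift[of x] by auto
      obtain i where i: "i \<in> {1..n-1}" "(T^^m) l < b i" "b i \<le> (T^^m) x"
        using not_same_interval_crosses_D[OF r split] by blast
      define z where "z = l + (b i - (T^^m) l)"
      have z: "l < z" "z \<le> x" using i shift[of x] l unfolding z_def by auto
      then have "(T^^m) z = b i" using shift[of z] unfolding z_def by auto
      then have "z \<in> Bad" unfolding Bad_def using z l Suc.prems b_in_D[OF i(1)] by (auto intro!: exI[of _ m])
      then show False using lmax z by fastforce
    qed
    then show ?case using hyp less_Suc_eq by auto
  qed simp
  then show thesis using that l lB unfolding Bad_def by blast
qed

lemma no_periodic_points:
  assumes x: "0 \<le> x" "x < 1" and p: "p \<ge> 1" and per: "(T^^p) x = x"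
  shows False
proof -
  obtain l where l: "0 \<le> l" "l \<le> x" and hit: "\<exists>j<p. (T^^j) l \<in> insert 0 D"
    and same: "\<forall>j<p. same_interval ((T^^j) l) ((T^^j) x)"
    by (rule rigid_left_extension[OF x p])
  obtain j where j: "j < p" "(T^^j) l \<in> insert 0 D" using hit by blast
  have "(T^^p) x = (T^^p) l + (x - l)" using funpow_T_translate[OF l x(2) same, of x] l by blast
  then have "(T^^p) l = l" using per by linarith
  have "(T^^p) ((T^^j) l) = (T^^(j + p)) l" by (subst add.commute) (simp add: funpow_add)
  also have "\<dots> = (T^^j) l" using \<open>(T^^p) l = l\<close> by (simp add: funpow_add)
  finally have perd: "(T^^p) ((T^^j) l) = (T^^j) l" .
  show False
  proof (cases "(T^^j) l = 0")
    case True
    have "T ((T^^p) e) = (T^^p) (T e)" by (rule funpow_swap1)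
    then have "T ((T^^p) e) = T e" using perd True by (simp add: T_e)
    then have "(T^^p) e = e" using T_inj[of "(T^^p) e" e] funpow_T_bounds[of e p] e_bounds by blast
    then show False using keane_funpow_D[OF e_in_D p] e_in_D by metis
  next
    case False
    then show False using j(2) keane_funpow_D[of "(T^^j) l" p] p perd by auto
  qed
qed

text \<open>
  By pigeonhole two iterates of the interval overlap, so some T^p moves an iterate by t with |t|
  less than its length; t = 0 gives a periodic point, and t \<noteq> 0 lets repeated extension
  produce stable intervals longer than 1.
\<close>

lemma no_stable_interval: "\<not> stable_interval u v"
proof
  assume st: "stable_interval u v"
  define l where "l = v - u"
  have rng: "0 \<le> u" "u < v" "v < 1" using st unfolding stable_interval_def by auto
  then have l: "l > 0" unfolding l_def by simp
  have "0 \<le> (T^^j) u \<and> (T^^j) u < 1" for j using funpow_T_bounds rng by auto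
  then obtain j k where jk: "j < k" "\<bar>(T^^j) u - (T^^k) u\<bar> < l"
    using l by (rule close_pair_in_unit_interval)
  define w where "w = (T^^j) u"
  have stw: "stable_interval w (w + l)"
    using stable_interval_funpow[OF st, of j] unfolding w_def l_def .
  define t where "t = (T^^k) u - w"
  have tp: "(T^^(k - j)) w = w + t"
    using jk unfolding t_def w_def funpow_apply_funpow by simp
  show False
  proof (cases "t = 0")
    case True
    have "k - j \<ge> 1" using jk by simp
    then show False
      using no_periodic_points[of w "k - j"] tp True stw unfolding stable_interval_def by auto
  next
    case False
    have tl: "\<bar>t\<bar> \<le> (w + l) - w" using jk unfolding t_def w_def by auto
    obtain m :: nat where m: "1 < real m * \<bar>t\<bar>" using reals_Archimedean3[of "\<bar>t\<bar>"] False by auto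
    obtain lo hi where "stable_interval lo hi" "hi - lo = (w + l) - w + real m * \<bar>t\<bar>"
      using stable_interval_extend_funpow[OF stw tp False tl, of m] by blast
    then show False using m l unfolding stable_interval_def by auto
  qed
qed

text \<open>
  Uniformity comes from a grid of mesh \<epsilon>/2: each grid cell is split by some iterate, and a
  segment of length \<ge> \<epsilon> contains a whole cell.
\<close>

lemma same_itinerary_close_le:
  assumes eps: "\<epsilon> > 0"
  obtains K where "\<And>u v. 0 \<le> u \<Longrightarrow> u \<le> v \<Longrightarrow> v < 1 \<Longrightarrow>
    \<forall>j\<le>K. same_interval ((T^^j) u) ((T^^j) v) \<Longrightarrow> v - u < \<epsilon>"
proof -
  define h where "h = \<epsilon> / 2"
  have h: "h > 0" using eps h_def by auto
  define split_time where
    "split_time g = (LEAST j. \<not> same_interval ((T^^j) (real g * h)) ((T^^j) (real (Suc g) * h)))"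
    for g
  have split_time: "\<not> same_interval ((T^^split_time g) (real g * h)) ((T^^split_time g) (real (Suc g) * h))"
    if "real (Suc g) * h < 1" for g
  proof -
    have "\<exists>j. \<not> same_interval ((T^^j) (real g * h)) ((T^^j) (real (Suc g) * h))"
      using no_stable_interval that h unfolding stable_interval_def by (auto simp: distrib_right)
    then show ?thesis unfolding split_time_def by (rule LeastI_ex)
  qed
  define K where "K = Max (split_time ` {0..nat \<lceil>1 / h\<rceil>})"
  show thesis
  proof (rule that[of K], rule ccontr)
    fix u v :: real
    assume uv: "0 \<le> u" "u \<le> v" "v < 1" and all: "\<forall>j\<le>K. same_interval ((T^^j) u) ((T^^j) v)"
      and "\<not> v - u < \<epsilon>"
    then have "u + 2 * h \<le> v" "v \<le> 1" unfolding h_def by auto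
    then obtain g where g: "u \<le> real g * h" "real (Suc g) * h \<le> v" "g \<le> nat \<lceil>1 / h\<rceil>"
      using grid_cell_within[OF h uv(1)] by blast
    then have "split_time g \<le> K" unfolding K_def by auto
    then have close: "same_interval ((T^^split_time g) u) ((T^^split_time g) z)"
      if "u \<le> z" "z \<le> v" for z
      using funpow_T_translate[OF uv, of "Suc (split_time g)" z] all that by auto
    have cell: "real g * h \<le> v" "u \<le> real (Suc g) * h" "real (Suc g) * h < 1"
      using g h uv by (auto simp: distrib_right)
    have "same_interval ((T^^split_time g) (real g * h)) ((T^^split_time g) (real (Suc g) * h))"
      using close[OF g(1) cell(1)] close[OF cell(2) g(2)] same_interval_sym same_interval_trans
      by blast
    then show False using split_time[OF cell(3)] by blast
  qed
qed

lemma same_itinerary_close: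
  assumes "\<epsilon> > 0"
  obtains K where "\<And>u v. 0 \<le> u \<Longrightarrow> u < 1 \<Longrightarrow> 0 \<le> v \<Longrightarrow> v < 1 \<Longrightarrow>
    \<forall>j\<le>K. same_interval ((T^^j) u) ((T^^j) v) \<Longrightarrow> \<bar>u - v\<bar> < \<epsilon>"
proof -
  obtain K where K: "\<And>u v. 0 \<le> u \<Longrightarrow> u \<le> v \<Longrightarrow> v < 1 \<Longrightarrow>
    \<forall>j\<le>K. same_interval ((T^^j) u) ((T^^j) v) \<Longrightarrow> v - u < \<epsilon>"
    using same_itinerary_close_le[OF assms] by blast
  show thesis
  proof (rule that[of K])
    fix u v :: real
    assume uv: "0 \<le> u" "u < 1" "0 \<le> v" "v < 1"
      and same: "\<forall>j\<le>K. same_interval ((T^^j) u) ((T^^j) v)"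
    then have "\<forall>j\<le>K. same_interval ((T^^j) v) ((T^^j) u)" using same_interval_sym by blast
    then show "\<bar>u - v\<bar> < \<epsilon>" using K[of u v] K[of v u] uv same by (cases "u \<le> v") auto
  qed
qed

lemma bt_notin_D: "k < n \<Longrightarrow> bt k \<notin> D"
proof -
  assume k: "k < n"
  define j where "j = inv tau (Suc k)"
  have j: "j \<in> {1..n}" using inv_tau_in k unfolding j_def by auto
  have bt: "bt k = T (b (j - 1))" using bt_eq_T_b[OF k] unfolding j_def .
  show ?thesis
  proof (cases "j = 1")
    case True
    then have "bt k = (T^^2) e" using bt T_e b_0 by (simp add: numeral_2_eq_2)
    then show ?thesis using keane_funpow_D[OF e_in_D, of 2] by simp
  next
    case False
    then have "j - 1 \<in> {1..n-1}" using j by auto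
    then have "b (j - 1) \<in> D" by (rule b_in_D)
    then show ?thesis using keane_funpow_D[of _ 1] bt by simp
  qed
qed

lemma Td_b_ne_T_b:
  assumes split: "split_perm n tau" and i: "i \<in> {1..n-1}"
  shows "Td (b i) \<noteq> T (b i)"
proof
  assume eq: "Td (b i) = T (b i)"
  have i1: "i \<in> {1..n}" "i + 1 \<in> {1..n}" using i by auto
  have t: "tau i \<in> {1..n}" "tau (i + 1) \<in> {1..n}" using tau_in i1 by auto
  have "bt (tau i) = bt (tau (i + 1) - 1)" using eq Td_b[OF i1(1)] T_b[OF i1(2)] by simp
  then have "tau i = tau (i + 1) - 1" using bt_eq_iff[of "tau i" "tau (i + 1) - 1"] t by auto
  then have "tau (i + 1) = tau i + 1" using t by auto
  then show False using split i unfolding split_perm_def by blast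
qed

lemma Td_Td_e_ne_T_0:
  assumes ends: "tau 1 \<noteq> tau n + 1"
  shows "Td (Td e) \<noteq> T 0"
proof
  assume eq: "Td (Td e) = T 0"
  define i where "i = inv tau 1 - 1"
  have i: "i \<in> {1..n}" using inv_tau_1_index unfolding i_def by auto
  have l: "Td e = bt (tau i)" using Td_b[OF i] unfolding e_def i_def .
  have T0: "T 0 = bt (tau 1 - 1)" using T_b[of 1] b_0 n2 by simp
  have t1: "tau 1 \<in> {1..n}" "tau n \<in> {1..n}" using tau_in n2 by auto
  show False
  proof (cases "tau i = n")
    case True
    then have "Td (Td e) = bt (tau n)" using l Td_b[of n] n2 bt_n b_n by simp
    then have "tau n = tau 1 - 1" using eq T0 bt_eq_iff t1 by auto
    then show False using ends t1 by auto
  next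
    case False
    then have "tau i < n" "0 < tau i" using tau_in[OF i] by auto
    then have lb: "0 < Td e" "Td e < 1" "Td e \<notin> D"
      using l bt_less[of 0 "tau i"] bt_less[of "tau i" n] bt_0 bt_n bt_notin_D by auto
    then have "T (Td e) = T 0" using T_eq_Td eq by simp
    then have "Td e = 0" using T_inj[of "Td e" 0] lb by simp
    then show False using lb by simp
  qed
qed

text \<open>
  T and Td can only disagree at points of D, at 0 and at 1; by the Keane condition the T-orbit of
  b_i avoids D, so the only way for the two orbits to meet is through T b_i = 0, i.e. b_i = e.
\<close>

lemma funpow_Td_b_ne_funpow_T_b:
  assumes split: "split_perm n tau" and ends: "tau 1 \<noteq> tau n + 1"
    and i: "i \<in> {1..n-1}" and L: "L \<ge> 1"
  shows "(Td^^L) (b i) \<noteq> (T^^L) (b i)"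
  using L
proof (induction L rule: dec_induct)
  case base
  show ?case using Td_b_ne_T_b[OF split i] by simp
next
  case (step L)
  define l where "l = (Td^^L) (b i)"
  define r where "r = (T^^L) (b i)"
  have bi: "0 < b i" "b i < 1" using D_bounds b_in_D[OF i] by auto
  have l: "0 < l" "l \<le> 1" using funpow_Td_bounds bi unfolding l_def by auto
  have r: "0 \<le> r" "r < 1" "r \<notin> D"
    using funpow_T_bounds bi keane_funpow_D[OF b_in_D[OF i] step(1)] unfolding r_def by auto
  have "Td l \<noteq> T r"
  proof
    assume eq: "Td l = T r"
    have "r = 0"
    proof (rule ccontr)
      assume "r \<noteq> 0"
      then have "Td l = Td r" using T_eq_Td r eq by simp
      then show False using Td_inj[of l r] l r \<open>r \<noteq> 0\<close> step(3) unfolding l_def r_def by auto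
    qed
    obtain L' where L': "L = Suc L'" using step(1) by (cases L) auto
    have e: "(T^^L') (b i) = e"
      using \<open>r = 0\<close> T_eq_0_iff funpow_T_bounds bi unfolding r_def L' by auto
    then have "L' = 0" using keane_funpow_D[OF b_in_D[OF i], of L'] e_in_D by (cases L') auto
    with e have "L' = 0" "b i = e" by auto
    then show False using eq \<open>r = 0\<close> Td_Td_e_ne_T_0[OF ends] unfolding l_def L' by simp
  qed
  then show ?case unfolding l_def r_def by simp
qed

lemma crossing_pair_separates:
  assumes split: "split_perm n tau" and ends: "tau 1 \<noteq> tau n + 1" and L: "L \<ge> 1"
  obtains \<epsilon> where "\<epsilon> > 0"
    "\<And>p q. 0 \<le> p \<Longrightarrow> p \<le> q \<Longrightarrow> q < 1 \<Longrightarrow> \<not> same_interval p q \<Longrightarrow> q - p < \<epsilon> \<Longrightarrow>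
      \<epsilon> \<le> \<bar>(T^^L) q - (T^^L) p\<bar>"
proof -
  define gap where "gap i = \<bar>(Td^^L) (b i) - (T^^L) (b i)\<bar>" for i
  have "\<forall>\<^sub>F \<delta> in at_right 0. \<forall>i\<in>{1..n-1}. (T^^L) (b i - \<delta>) = (Td^^L) (b i) - \<delta> \<and>
      (T^^L) (b i + \<delta>) = (T^^L) (b i) + \<delta> \<and> 3 * \<delta> < gap i"
  proof (rule eventually_ball_finite, simp, intro ballI eventually_conj)
    fix i assume i: "i \<in> {1..n-1}"
    have bi: "0 < b i" "b i < 1" using D_bounds b_in_D[OF i] by auto
    show "\<forall>\<^sub>F \<delta> in at_right 0. (T^^L) (b i - \<delta>) = (Td^^L) (b i) - \<delta>"
      using eventually_funpow_T_left bi by simp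
    show "\<forall>\<^sub>F \<delta> in at_right 0. (T^^L) (b i + \<delta>) = (T^^L) (b i) + \<delta>"
      using eventually_funpow_T_right bi by simp
    have "gap i > 0" using funpow_Td_b_ne_funpow_T_b[OF split ends i L] unfolding gap_def by simp
    then show "\<forall>\<^sub>F \<delta> in at_right 0. 3 * \<delta> < gap i"
      unfolding eventually_at_right_field by (intro exI[of _ "gap i / 3"]) auto
  qed
  then obtain \<epsilon>0 where \<epsilon>0: "\<epsilon>0 > 0" and near: "\<And>\<delta> i. 0 < \<delta> \<Longrightarrow> \<delta> < \<epsilon>0 \<Longrightarrow> i \<in> {1..n-1} \<Longrightarrow>
      (T^^L) (b i - \<delta>) = (Td^^L) (b i) - \<delta> \<and> (T^^L) (b i + \<delta>) = (T^^L) (b i) + \<delta> \<and> 3 * \<delta> < gap i"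
    unfolding eventually_at_right_field by blast
  show thesis
  proof (rule that[of "\<epsilon>0 / 2"])
    fix p q
    assume pq: "0 \<le> p" "p \<le> q" "q < 1" "\<not> same_interval p q" "q - p < \<epsilon>0 / 2"
    obtain i where i: "i \<in> {1..n-1}" "p < b i" "b i \<le> q"
      using not_same_interval_crosses_D[OF pq(1-4)] by blast
    have "3 * (\<epsilon>0 / 2) < gap i" using near[of "\<epsilon>0 / 2" i] \<epsilon>0 i by auto
    moreover have "(T^^L) p = (Td^^L) (b i) - (b i - p)"
      using near[of "b i - p" i] i pq by auto
    moreover have "(T^^L) q = (T^^L) (b i) + (q - b i)"
      using near[of "q - b i" i] i pq by (cases "q = b i") auto
    ultimately show "\<epsilon>0 / 2 \<le> \<bar>(T^^L) q - (T^^L) p\<bar>"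
      using pq unfolding gap_def by linarith
  qed (use \<epsilon>0 in simp)
qed

lemma no_itinerary_bubble:
  assumes split: "split_perm n tau" and ends: "tau 1 \<noteq> tau n + 1" and L: "L \<ge> 1"
  obtains K where "\<And>x y F. 0 \<le> x \<Longrightarrow> x < 1 \<Longrightarrow> 0 \<le> y \<Longrightarrow> y < 1 \<Longrightarrow> K < F \<Longrightarrow>
      \<forall>j<F. same_interval ((T^^j) x) ((T^^j) y) \<Longrightarrow>
      \<not> same_interval ((T^^F) x) ((T^^F) y) \<Longrightarrow>
      \<exists>j\<le>K. \<not> same_interval ((T^^(j + (F + L))) x) ((T^^(j + (F + L))) y)"
proof -
  obtain \<epsilon> where \<epsilon>: "\<epsilon> > 0" and sep: "\<And>p q. 0 \<le> p \<Longrightarrow> p \<le> q \<Longrightarrow> q < 1 \<Longrightarrow>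
      \<not> same_interval p q \<Longrightarrow> q - p < \<epsilon> \<Longrightarrow> \<epsilon> \<le> \<bar>(T^^L) q - (T^^L) p\<bar>"
    using crossing_pair_separates[OF split ends L] by blast
  obtain K where K: "\<And>u v. 0 \<le> u \<Longrightarrow> u < 1 \<Longrightarrow> 0 \<le> v \<Longrightarrow> v < 1 \<Longrightarrow>
      \<forall>j\<le>K. same_interval ((T^^j) u) ((T^^j) v) \<Longrightarrow> \<bar>u - v\<bar> < \<epsilon>"
    using same_itinerary_close[OF \<epsilon>] by blast
  show thesis
  proof (rule that[of K], rule ccontr)
    fix x y F
    assume xy: "0 \<le> x" "x < 1" "0 \<le> y" "y < 1" and F: "K < F"
      and before: "\<forall>j<F. same_interval ((T^^j) x) ((T^^j) y)"
      and split_F: "\<not> same_interval ((T^^F) x) ((T^^F) y)"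
      and "\<not> (\<exists>j\<le>K. \<not> same_interval ((T^^(j + (F + L))) x) ((T^^(j + (F + L))) y))"
    then have after: "\<forall>j\<le>K. same_interval ((T^^j) ((T^^(F + L)) x)) ((T^^j) ((T^^(F + L)) y))"
      by (simp add: funpow_apply_funpow)
    have "\<bar>(T^^F) x - (T^^F) y\<bar> < \<epsilon>"
      using K[OF xy] before F funpow_T_diff[OF xy before] by simp
    then have "\<epsilon> \<le> \<bar>(T^^L) ((T^^F) x) - (T^^L) ((T^^F) y)\<bar>"
      using sep[of "(T^^F) x" "(T^^F) y"] sep[of "(T^^F) y" "(T^^F) x"] split_F
        funpow_T_bounds[OF xy(1,2), of F] funpow_T_bounds[OF xy(3,4), of F] same_interval_sym
      by (cases "(T^^F) x \<le> (T^^F) y") (auto simp: abs_minus_commute)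
    moreover have "\<bar>(T^^(F + L)) x - (T^^(F + L)) y\<bar> < \<epsilon>"
      using K after funpow_T_bounds xy by blast
    ultimately show False by (simp add: funpow_apply_funpow add.commute)
  qed
qed

lemma X_asymptotic_eq:
  assumes split: "split_perm n tau" and ends: "tau 1 \<noteq> tau n + 1"
    and \<alpha>: "\<alpha> \<in> iet_X n a tau" and \<beta>: "\<beta> \<in> iet_X n a tau"
    and agree: "\<forall>i. \<bar>i\<bar> \<ge> int N \<longrightarrow> \<alpha> i = \<beta> i"
  shows "\<alpha> = \<beta>"
proof (rule ccontr)
  assume "\<alpha> \<noteq> \<beta>"
  then obtain f where f: "\<bar>f\<bar> < int N" "\<alpha> f \<noteq> \<beta> f" "\<And>k. k < f \<Longrightarrow> \<alpha> k = \<beta> k"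
    using first_difference agree by blast
  define L where "L = nat (int N - f)"
  have L: "L \<ge> 1" using f(1) unfolding L_def by auto
  obtain K where K: "\<And>x y F. 0 \<le> x \<Longrightarrow> x < 1 \<Longrightarrow> 0 \<le> y \<Longrightarrow> y < 1 \<Longrightarrow> K < F \<Longrightarrow>
      \<forall>j<F. same_interval ((T^^j) x) ((T^^j) y) \<Longrightarrow>
      \<not> same_interval ((T^^F) x) ((T^^F) y) \<Longrightarrow>
      \<exists>j\<le>K. \<not> same_interval ((T^^(j + (F + L))) x) ((T^^(j + (F + L))) y)"
    using no_itinerary_bubble[OF split ends L] by blast
  txt \<open>The window [-M, M] then reaches K steps beyond N and starts more than K steps before f.\<close>
  define M where "M = K + N + 1"
  obtain x y where x: "0 \<le> x" "x < 1" and y: "0 \<le> y" "y < 1" and same_iff: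
    "\<And>j. j \<le> 2 * M \<Longrightarrow>
      same_interval ((T^^j) x) ((T^^j) y) \<longleftrightarrow> \<alpha> (int j - int M) = \<beta> (int j - int M)"
    using X_pair_window_realised[OF \<alpha> \<beta>] by blast
  define F where "F = nat (int M + f)"
  have F: "int F = int M + f" "K < F" "F + L = M + N"
    using f(1) unfolding F_def L_def M_def by auto
  have "\<forall>j<F. same_interval ((T^^j) x) ((T^^j) y)"
    using same_iff f(3) F unfolding M_def by auto
  moreover have "\<not> same_interval ((T^^F) x) ((T^^F) y)"
    using same_iff[of F] f(2) F unfolding M_def by auto
  moreover have "same_interval ((T^^(j + (F + L))) x) ((T^^(j + (F + L))) y)" if "j \<le> K" for j
  proof -
    have j: "j + (F + L) \<le> 2 * M" "\<bar>int (j + (F + L)) - int M\<bar> \<ge> int N"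
      using that F unfolding M_def by auto
    then have "\<alpha> (int (j + (F + L)) - int M) = \<beta> (int (j + (F + L)) - int M)" using agree by blast
    then show ?thesis using same_iff[OF j(1)] by blast
  qed
  ultimately show False using K[OF x y F(2)] by blast
qed

end

theorem theorem4p6:
  fixes n :: nat and a :: "nat \<Rightarrow> real" and tau :: "nat \<Rightarrow> nat"
  assumes "n \<ge> 2"
    and "\<forall>i\<in>{1..n}. a i > 0"
    and "(\<Sum>i=1..n. a i) = 1"
    and "tau permutes {1..n}"
    and "irreducible_perm n tau"
    and "fully_split_perm n tau"
    and "keane_condition n a tau"
  shows "\<forall>\<alpha>\<in>iet_X n a tau. \<forall>\<beta>\<in>iet_X n a tau.
           (\<exists>N::nat. \<forall>i::int. \<bar>i\<bar> \<ge> int N \<longrightarrow> \<alpha> i = \<beta> i) \<longrightarrow> \<alpha> = \<beta>"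
proof -
  interpret keane_iet n a tau
    by (intro keane_iet.intro iet.intro keane_iet_axioms.intro) (fact assms)+
  have "split_perm n tau" "tau 1 \<noteq> tau n + 1"
    using \<open>fully_split_perm n tau\<close> unfolding fully_split_perm_def by auto
  then show ?thesis using X_asymptotic_eq by blast
qed

end
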